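(* Let $n$ be a positive integer. Let $R_n\subseteq T_n$ be the set of triples $(A,B,C)\in T_n$ with $C$ empty, and let $D_n^0\subseteq D_n$ be the set of pairs $(H,X)\in D_n$ with $X$ on the horizontal axis. Define $r:R_n\to D_n^0$ by $r(A,B,\emptyset)=(H,X)$, where $H$ is the concatenation of $A$ and $B$ and $X$ is the point at which $A$ and $B$ meet. Then $r$ is a bijection.
   Context: A lattice path here is a finite (possibly empty) sequence of steps, each an up step $(1,1)$ or a down step $(1,-1)$, drawn as a polygonal line from a given starting lattice point; its lattice points are its starting point and the endpoints of its steps. $T_n$ is the set of ordered triples $(A,B,C)$ of lattice paths such that for some nonnegative integers $i,j,k$ with $i+j+k=n$, $A$ has $i$ up and $i$ down steps, $B$ has $j$ up and $j$ down steps, and $C$ has $k$ up and $k$ down steps. $D_n$ is the set of pairs $(H,X)$ where $H$ is a lattice path with $n$ up steps and $n$ down steps drawn from $(0,0)$ to $(2n,0)$ and $X$ is one of the $2n+1$ lattice points of $H$. The concatenation of paths is obtained by drawing them successively, each starting at the endpoint of the preceding one, the first starting at $(0,0)$. *)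

theory Defs
  imports Main
begin

datatype step = Up | Down

type_synonym lpath = "step list"
type_synonym point = "int \<times> int"

fun step_vec :: "step \<Rightarrow> point" where
  "step_vec Up = (1, 1)"
| "step_vec Down = (1, -1)"

fun endpt :: "point \<Rightarrow> lpath \<Rightarrow> point" where
  "endpt p [] = p"
| "endpt (x, y) (s # xs) = endpt (x + fst (step_vec s), y + snd (step_vec s)) xs"

definition lattice_points :: "point \<Rightarrow> lpath \<Rightarrow> point set" where
  "lattice_points p xs = {endpt p (take m xs) | m. m \<le> length xs}"

definition ups :: "lpath \<Rightarrow> nat" where "ups xs = length (filter (\<lambda>s. s = Up) xs)"
definition downs :: "lpath \<Rightarrow> nat" where "downs xs = length (filter (\<lambda>s. s = Down) xs)"

definition T :: "nat \<Rightarrow> (lpath \<times> lpath \<times> lpath) set" where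
  "T n = {(A, B, C). \<exists>i j k. i + j + k = n \<and> ups A = i \<and> downs A = i
            \<and> ups B = j \<and> downs B = j \<and> ups C = k \<and> downs C = k}"

definition D :: "nat \<Rightarrow> (lpath \<times> point) set" where
  "D n = {(H, X). ups H = n \<and> downs H = n \<and> endpt (0, 0) H = (2 * int n, 0)
            \<and> X \<in> lattice_points (0, 0) H}"

definition R :: "nat \<Rightarrow> (lpath \<times> lpath \<times> lpath) set" where
  "R n = {(A, B, C) \<in> T n. C = []}"

definition D0 :: "nat \<Rightarrow> (lpath \<times> point) set" where
  "D0 n = {(H, X) \<in> D n. snd X = 0}"

text \<open>Concatenation A then B (A from (0,0), B from A's endpoint) is the step list A @ B;
  the meeting point is the endpoint of A.\<close>
definition r :: "lpath \<times> lpath \<times> lpath \<Rightarrow> lpath \<times> point" where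
  "r t = (case t of (A, B, C) \<Rightarrow> (A @ B, endpt (0, 0) A))"

end

theory Submission
  imports Defs
begin

text \<open>A path drawn from the origin ends at height \<open>ups - downs\<close>, so a triple with empty third
  component lies in \<open>R n\<close> exactly when \<open>A\<close> and \<open>B\<close> both return to their starting height, and
  the meeting point of \<open>A\<close> and \<open>B\<close> is on the axis exactly when \<open>A\<close> is such a prefix of
  \<open>A @ B\<close>. Hence \<open>r\<close> is inverse to cutting \<open>H\<close> at the position of \<open>X\<close>; that position is
  determined by the abscissa of \<open>X\<close>, which gives injectivity.\<close>

lemma ups_simps [simp]:
  "ups [] = 0" "ups (s # xs) = (if s = Up then 1 else 0) + ups xs"
  "ups (xs @ ys) = ups xs + ups ys"
  by (auto simp: ups_def)

lemma downs_simps [simp]: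
  "downs [] = 0" "downs (s # xs) = (if s = Down then 1 else 0) + downs xs"
  "downs (xs @ ys) = downs xs + downs ys"
  by (auto simp: downs_def)

lemma length_eq_ups_plus_downs: "length xs = ups xs + downs xs"
proof (induction xs)
  case (Cons s xs)
  then show ?case by (cases s) auto
qed simp

lemma endpt_eq: "endpt (x, y) xs = (x + int (length xs), y + int (ups xs) - int (downs xs))"
proof (induction xs arbitrary: x y)
  case (Cons s xs)
  then show ?case by (cases s) auto
qed simp

lemma endpt_origin: "endpt (0, 0) xs = (int (length xs), int (ups xs) - int (downs xs))"
  using endpt_eq[of 0 0 xs] by simp

lemma mem_R_iff:
  "(A, B, C) \<in> R n \<longleftrightarrow>
     C = [] \<and> ups A = downs A \<and> ups B = downs B \<and> ups A + ups B = n"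
  by (auto simp: R_def T_def)

lemma mem_D0_iff:
  "(H, X) \<in> D0 n \<longleftrightarrow>
     ups H = n \<and> downs H = n \<and>
     (\<exists>m \<le> length H. X = endpt (0, 0) (take m H) \<and> ups (take m H) = downs (take m H))"
proof -
  have on_axis: "snd (endpt (0, 0) (take m H)) = 0 \<longleftrightarrow> ups (take m H) = downs (take m H)" for m
    by (simp add: endpt_origin)
  have "ups H = n \<Longrightarrow> downs H = n \<Longrightarrow> endpt (0, 0) H = (2 * int n, 0)"
    using length_eq_ups_plus_downs[of H] by (simp add: endpt_origin)
  then show ?thesis
    unfolding D0_def D_def lattice_points_def using on_axis by blast
qed

lemma inj_on_r: "inj_on r (R n)"
proof (rule inj_onI)
  fix t t' assume "t \<in> R n" "t' \<in> R n" and r_eq: "r t = r t'"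
  then obtain A B A' B' where t: "t = (A, B, [])" and t': "t' = (A', B', [])"
    by (metis mem_R_iff prod_cases3)
  have "A @ B = A' @ B'" and "length A = length A'"
    using r_eq by (auto simp: r_def t t' endpt_origin)
  then show "t = t'" by (simp add: t t' append_eq_append_conv)
qed

lemma image_r_R: "r ` R n = D0 n"
proof
  show "r ` R n \<subseteq> D0 n"
  proof
    fix z assume "z \<in> r ` R n"
    then obtain A B C where z: "z = r (A, B, C)" and ABC: "(A, B, C) \<in> R n"
      by auto
    have "ups A = downs A" "ups (A @ B) = n" "downs (A @ B) = n"
      using ABC by (auto simp: mem_R_iff)
    moreover have "A = take (length A) (A @ B)" by simp
    ultimately have "(A @ B, endpt (0, 0) A) \<in> D0 n"
      unfolding mem_D0_iff by (metis le_add1 length_append)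
    then show "z \<in> D0 n" by (simp add: z r_def)
  qed
next
  show "D0 n \<subseteq> r ` R n"
  proof
    fix z assume "z \<in> D0 n"
    then obtain H X where z: "z = (H, X)" and "(H, X) \<in> D0 n"
      by (cases z) auto
    then obtain m where X: "X = endpt (0, 0) (take m H)"
      and H: "ups H = n" "downs H = n" and balanced: "ups (take m H) = downs (take m H)"
      by (auto simp: mem_D0_iff)
    have "ups (take m H) + ups (drop m H) = n" "downs (take m H) + downs (drop m H) = n"
      using H by (simp_all flip: ups_simps(3) downs_simps(3))
    then have "(take m H, drop m H, []) \<in> R n"
      using balanced by (simp add: mem_R_iff)
    moreover have "r (take m H, drop m H, []) = z"
      by (simp add: r_def z X)
    ultimately show "z \<in> r ` R n" by (metis image_eqI)
  qed
qed

theorem proposition1: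
  fixes n :: nat
  assumes "n > 0"
  shows "bij_betw r (R n) (D0 n)"
  using inj_on_r image_r_R by (rule bij_betw_imageI)

end
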